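(* Let $\mathcal{A}$ be a finite alphabet, let $X$ be the set of finite sequences (words) over $\mathcal{A}$, and let $\alpha,\beta,\gamma\in\mathbb{R}$. Let $s:X\times X\to\mathbb{R}$ be the scoring function with letter scores $\alpha$ (match), $\beta$ (mismatch), $\gamma$ (insertion/deletion) described in the context. If $\alpha<\min\{\beta,\gamma,0\}$, $\beta\le 2\gamma$ and $\gamma>0$, then $s$ is a strong partial metric on $X$, i.e. for all $x,y,z\in X$: (i) $s(x,x)<s(x,y)$ whenever $x\neq y$; (ii) $s(x,y)=s(y,x)$; (iii) $s(x,y)\le s(x,z)+s(z,y)-s(z,z)$.
   Context: Adjoin a gap symbol $-\notin\mathcal{A}$ and set $\mathcal{A}^\star=\mathcal{A}\cup\{-\}$. An alignment $\mathcal{L}$ of two words $x,y\in X$ is obtained by inserting gap symbols into $x$ and $y$ so that both become sequences $\langle x_i\rangle_{i=1}^m$, $\langle y_i\rangle_{i=1}^m$ over $\mathcal{A}^\star$ of the same length $m$ (deleting the gaps recovers $x$ and $y$). Each position $i$ receives a score $h_{(\mathcal{L},i)}(x,y)$: $\gamma$ if exactly one of $x_i,y_i$ is $-$ (deletion or insertion); $\alpha$ if $x_i=y_i\in\mathcal{A}$ (match); $\beta$ if $x_i,y_i\in\mathcal{A}$ and $x_i\neq y_i$ (mismatch); $0$ if $x_i=y_i=-$ (relay). The score of the alignment is $h_\mathcal{L}(x,y)=\sum_{i=1}^m h_{(\mathcal{L},i)}(x,y)$, and the scoring function is $s(x,y)=\min\{h_\mathcal{L}(x,y)\mid \mathcal{L}\text{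 an alignment of }x\text{ and }y\}$. *)

theory Defs
  imports Main Complex_Main
begin

text \<open>Gap symbol: the extended alphabet A* = A \<union> {-} is modelled as 'a option,
  with None the gap symbol and Some a the letter a.\<close>

definition del_gaps :: "'a option list \<Rightarrow> 'a list" where
  "del_gaps u = map the (filter (\<lambda>c. c \<noteq> None) u)"

text \<open>An alignment of x and y: two equal-length sequences over A* which
  yield x and y after deleting gaps (relay columns allowed).\<close>
definition is_alignment :: "'a list \<Rightarrow> 'a list \<Rightarrow> 'a option list \<Rightarrow> 'a option list \<Rightarrow> bool" where
  "is_alignment x y u v \<longleftrightarrow> length u = length v \<and> del_gaps u = x \<and> del_gaps v = y"

fun col_score :: "real \<Rightarrow> real \<Rightarrow> real \<Rightarrow> 'a option \<Rightarrow> 'a option \<Rightarrow> real" where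
  "col_score \<alpha> \<beta> \<gamma> None None = 0"
| "col_score \<alpha> \<beta> \<gamma> None (Some b) = \<gamma>"
| "col_score \<alpha> \<beta> \<gamma> (Some a) None = \<gamma>"
| "col_score \<alpha> \<beta> \<gamma> (Some a) (Some b) = (if a = b then \<alpha> else \<beta>)"

definition align_score :: "real \<Rightarrow> real \<Rightarrow> real \<Rightarrow> 'a option list \<Rightarrow> 'a option list \<Rightarrow> real" where
  "align_score \<alpha> \<beta> \<gamma> u v = (\<Sum>i<length u. col_score \<alpha> \<beta> \<gamma> (u ! i) (v ! i))"

text \<open>s(x,y) = min of alignment scores (the minimum exists; Inf equals it).\<close>
definition score :: "real \<Rightarrow> real \<Rightarrow> real \<Rightarrow> 'a list \<Rightarrow> 'a list \<Rightarrow> real" where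
  "score \<alpha> \<beta> \<gamma> x y = Inf {align_score \<alpha> \<beta> \<gamma> u v | u v. is_alignment x y u v}"

definition strong_partial_metric :: "('b \<Rightarrow> 'b \<Rightarrow> real) \<Rightarrow> bool" where
  "strong_partial_metric s \<longleftrightarrow>
     (\<forall>x y. x \<noteq> y \<longrightarrow> s x x < s x y) \<and>
     (\<forall>x y. s x y = s y x) \<and>
     (\<forall>x y z. s x y \<le> s x z + s z y - s z z)"

end

theory Submission
  imports Defs
begin

text \<open>An alignment is treated as its list of columns. A column that is neither a match nor a
  relay costs at least \<open>min \<gamma> (\<beta> - \<alpha>)\<close> more than the \<open>\<alpha>\<close> budgeted per letter of \<open>x\<close>, which
  gives \<open>s(x,x) = \<alpha> |x|\<close> and strictness as soon as \<open>x \<noteq> y\<close>, since then some column is an edit.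
  Swapping the two rows proves symmetry. For the triangle inequality, an alignment of \<open>x\<close>
  with \<open>z\<close> and one of \<open>z\<close> with \<open>y\<close> are merged along the letters of \<open>z\<close> into an alignment of
  \<open>x\<close> with \<open>y\<close>; columnwise, dropping a letter of \<open>z\<close> saves at least \<open>\<alpha>\<close>, and
  \<open>\<alpha> |z| = s(z,z)\<close>.\<close>

definition columns_score :: "real \<Rightarrow> real \<Rightarrow> real \<Rightarrow> ('a option \<times> 'a option) list \<Rightarrow> real" where
  "columns_score \<alpha> \<beta> \<gamma> cs = sum_list (map (\<lambda>(a, b). col_score \<alpha> \<beta> \<gamma> a b) cs)"

definition aligns :: "'a list \<Rightarrow> 'a list \<Rightarrow> ('a option \<times> 'a option) list \<Rightarrow> bool" where
  "aligns x y cs \<longleftrightarrow> del_gaps (map fst cs) = x \<and> del_gaps (map snd cs) = y"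

lemma columns_score_simps [simp]:
  "columns_score \<alpha> \<beta> \<gamma> [] = 0"
  "columns_score \<alpha> \<beta> \<gamma> ((a, b) # cs) = col_score \<alpha> \<beta> \<gamma> a b + columns_score \<alpha> \<beta> \<gamma> cs"
  by (simp_all add: columns_score_def)

lemma del_gaps_simps [simp]:
  "del_gaps [] = []"
  "del_gaps (None # u) = del_gaps u"
  "del_gaps (Some a # u) = a # del_gaps u"
  "del_gaps (u @ w) = del_gaps u @ del_gaps w"
  "del_gaps (map Some x) = x"
  "del_gaps (replicate n None) = []"
  by (simp_all add: del_gaps_def comp_def)

lemma del_gaps_Cons: "del_gaps (a # u) = (case a of None \<Rightarrow> del_gaps u | Some x \<Rightarrow> x # del_gaps u)"
  by (cases a) simp_all

lemma align_score_eq_columns_score: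
  "length u = length v \<Longrightarrow> align_score \<alpha> \<beta> \<gamma> u v = columns_score \<alpha> \<beta> \<gamma> (zip u v)"
  by (induction u v rule: list_induct2)
     (simp_all add: align_score_def sum.lessThan_Suc_shift del: sum.lessThan_Suc)

lemma score_eq_INF_aligns:
  "score \<alpha> \<beta> \<gamma> x y = (INF cs \<in> {cs. aligns x y cs}. columns_score \<alpha> \<beta> \<gamma> cs)"
proof -
  have "{align_score \<alpha> \<beta> \<gamma> u v | u v. is_alignment x y u v}
        = columns_score \<alpha> \<beta> \<gamma> ` {cs. aligns x y cs}"
  proof (intro equalityI subsetI)
    fix s assume "s \<in> {align_score \<alpha> \<beta> \<gamma> u v | u v. is_alignment x y u v}"
    then obtain u v where "is_alignment x y u v" "s = align_score \<alpha> \<beta> \<gamma> u v" by blast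
    then show "s \<in> columns_score \<alpha> \<beta> \<gamma> ` {cs. aligns x y cs}"
      by (intro image_eqI[of _ _ "zip u v"])
         (auto simp: is_alignment_def aligns_def align_score_eq_columns_score)
  next
    fix s assume "s \<in> columns_score \<alpha> \<beta> \<gamma> ` {cs. aligns x y cs}"
    then obtain cs where "aligns x y cs" "s = columns_score \<alpha> \<beta> \<gamma> cs" by blast
    then show "s \<in> {align_score \<alpha> \<beta> \<gamma> u v | u v. is_alignment x y u v}"
      by (intro CollectI exI[of _ "map fst cs"] exI[of _ "map snd cs"])
         (simp add: is_alignment_def aligns_def align_score_eq_columns_score zip_map_fst_snd)
  qed
  then show ?thesis by (simp add: score_def)
qed

lemma aligns_exists: "\<exists>cs. aligns x y cs"
  by (rule exI[of _ "zip (map Some x @ replicate (length y) None)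
                         (replicate (length x) None @ map Some y)"])
     (simp add: aligns_def)

lemma aligns_self: "aligns x x (map (\<lambda>a. (Some a, Some a)) x)"
  by (simp add: aligns_def comp_def)

lemma columns_score_self: "columns_score \<alpha> \<beta> \<gamma> (map (\<lambda>a. (Some a, Some a)) x) = \<alpha> * length x"
  by (induction x) (simp_all add: algebra_simps)

fun is_edit :: "'a option \<times> 'a option \<Rightarrow> bool" where
  "is_edit (None, None) = False"
| "is_edit (Some a, Some b) = (a \<noteq> b)"
| "is_edit _ = True"

lemma columns_score_lower_bound:
  fixes \<alpha> \<beta> \<gamma> :: real
  assumes "\<alpha> \<le> 0" "\<alpha> \<le> \<beta>" "0 \<le> \<gamma>"
  shows "\<alpha> * length (del_gaps (map fst cs)) + min \<gamma> (\<beta> - \<alpha>) * length (filter is_edit cs)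
         \<le> columns_score \<alpha> \<beta> \<gamma> cs"
proof (induction cs)
  case (Cons c cs)
  obtain a b where "c = (a, b)" by force
  with Cons assms show ?case
    by (cases a; cases b) (auto simp: distrib_left)
qed simp

lemma aligns_has_edit:
  assumes "aligns x y cs" "x \<noteq> y"
  shows "filter is_edit cs \<noteq> []"
proof
  assume "filter is_edit cs = []"
  then have "del_gaps (map fst cs) = del_gaps (map snd cs)"
  proof (induction cs)
    case (Cons c cs)
    obtain a b where "c = (a, b)" by force
    with Cons show ?case by (cases a; cases b) (auto split: if_splits)
  qed simp
  with assms show False unfolding aligns_def by argo
qed

lemma columns_score_swap:
  "columns_score \<alpha> \<beta> \<gamma> (map prod.swap cs) = columns_score \<alpha> \<beta> \<gamma> cs"
proof (induction cs)
  case (Cons c cs)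
  obtain a b where "c = (a, b)" by force
  with Cons show ?case by (cases a; cases b) auto
qed simp

lemma aligns_swap: "aligns y x (map prod.swap cs) \<longleftrightarrow> aligns x y cs"
  by (auto simp: aligns_def comp_def)

text \<open>Both middle rows spell \<open>z\<close> with gaps inserted differently: columns with a gap in one
  middle row are copied with a gap in the other, and the letters of \<open>z\<close> are paired off.\<close>

fun merge_columns :: "('a option \<times> 'a option) list \<Rightarrow> ('a option \<times> 'a option) list
    \<Rightarrow> ('a option \<times> 'a option) list" where
  "merge_columns ((a, None) # p) q = (a, None) # merge_columns p q"
| "merge_columns p ((None, b) # q) = (None, b) # merge_columns p q"
| "merge_columns ((a, Some c) # p) ((Some c', b) # q) = (a, b) # merge_columns p q"
| "merge_columns ((a, Some c) # p) [] = (a, None) # merge_columns p []"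
| "merge_columns [] ((Some c, b) # q) = (None, b) # merge_columns [] q"
| "merge_columns [] [] = []"

lemma del_gaps_fst_merge_columns:
  "del_gaps (map fst (merge_columns p q)) = del_gaps (map fst p)"
  by (induction p q rule: merge_columns.induct) (simp_all add: del_gaps_Cons split: option.splits)

lemma del_gaps_snd_merge_columns:
  "del_gaps (map snd (merge_columns p q)) = del_gaps (map snd q)"
  by (induction p q rule: merge_columns.induct) (simp_all add: del_gaps_Cons split: option.splits)

lemma col_score_triangle:
  assumes "\<alpha> \<le> 0" "\<alpha> \<le> \<beta>" "0 \<le> \<gamma>"
  shows "col_score \<alpha> \<beta> \<gamma> a b
         \<le> col_score \<alpha> \<beta> \<gamma> a (Some c) + col_score \<alpha> \<beta> \<gamma> (Some c) b - \<alpha>"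
  using assms by (cases a; cases b) auto

lemma columns_score_merge_columns:
  fixes \<alpha> \<beta> \<gamma> :: real
  assumes "\<alpha> \<le> 0" "\<alpha> \<le> \<beta>" "0 \<le> \<gamma>"
    and "del_gaps (map snd p) = del_gaps (map fst q)"
  shows "columns_score \<alpha> \<beta> \<gamma> (merge_columns p q)
         \<le> columns_score \<alpha> \<beta> \<gamma> p + columns_score \<alpha> \<beta> \<gamma> q - \<alpha> * length (del_gaps (map snd p))"
  using assms(4)
proof (induction p q rule: merge_columns.induct)
  case (3 a c p c' b q)
  then have "c' = c" "columns_score \<alpha> \<beta> \<gamma> (merge_columns p q)
      \<le> columns_score \<alpha> \<beta> \<gamma> p + columns_score \<alpha> \<beta> \<gamma> q - \<alpha> * length (del_gaps (map snd p))"
    by simp_all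
  with col_score_triangle[OF assms(1-3), of a b c] show ?case
    by (simp add: algebra_simps)
qed (auto split: option.splits)

context
  fixes \<alpha> \<beta> \<gamma> :: real
  assumes \<alpha>_nonpos: "\<alpha> \<le> 0" and \<alpha>_le_\<beta>: "\<alpha> \<le> \<beta>" and \<gamma>_nonneg: "0 \<le> \<gamma>"
begin

lemma columns_score_ge_aligned: "\<alpha> * length x \<le> columns_score \<alpha> \<beta> \<gamma> cs" if "aligns x y cs"
proof -
  have "0 \<le> min \<gamma> (\<beta> - \<alpha>) * length (filter is_edit cs)"
    using \<alpha>_le_\<beta> \<gamma>_nonneg by simp
  with columns_score_lower_bound[OF \<alpha>_nonpos \<alpha>_le_\<beta> \<gamma>_nonneg, of cs] that show ?thesis
    by (simp add: aligns_def)
qed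

lemma bdd_below_aligns: "bdd_below (columns_score \<alpha> \<beta> \<gamma> ` {cs. aligns x y cs})"
  by (rule bdd_belowI2[of _ "\<alpha> * length x"]) (auto intro: columns_score_ge_aligned)

lemma score_le: "score \<alpha> \<beta> \<gamma> x y \<le> columns_score \<alpha> \<beta> \<gamma> cs" if "aligns x y cs"
  unfolding score_eq_INF_aligns using that by (intro cINF_lower bdd_below_aligns) simp

lemma score_self: "score \<alpha> \<beta> \<gamma> x x = \<alpha> * length x"
proof (rule antisym)
  show "score \<alpha> \<beta> \<gamma> x x \<le> \<alpha> * length x"
    using score_le[OF aligns_self] by (simp add: columns_score_self)
  show "\<alpha> * length x \<le> score \<alpha> \<beta> \<gamma> x x"
    unfolding score_eq_INF_aligns using aligns_exists
    by (intro cINF_greatest columns_score_ge_aligned) auto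
qed

lemma score_commute: "score \<alpha> \<beta> \<gamma> x y = score \<alpha> \<beta> \<gamma> y x"
proof -
  have le: "score \<alpha> \<beta> \<gamma> y x \<le> score \<alpha> \<beta> \<gamma> x y" for x y :: "'a list"
  proof -
    have "score \<alpha> \<beta> \<gamma> y x \<le> columns_score \<alpha> \<beta> \<gamma> cs" if "aligns x y cs" for cs
      using score_le[of y x "map prod.swap cs"] that by (simp add: aligns_swap columns_score_swap)
    then show ?thesis
      unfolding score_eq_INF_aligns[of _ _ _ x y] using aligns_exists
      by (intro cINF_greatest) auto
  qed
  show ?thesis using le[of x y] le[of y x] by (rule antisym)
qed

lemma score_self_less:
  assumes "\<alpha> < \<beta>" "0 < \<gamma>" "x \<noteq> y"
  shows "score \<alpha> \<beta> \<gamma> x x < score \<alpha> \<beta> \<gamma> x y"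
proof -
  have "\<alpha> * length x + min \<gamma> (\<beta> - \<alpha>) \<le> columns_score \<alpha> \<beta> \<gamma> cs" if "aligns x y cs" for cs
  proof -
    have "1 \<le> length (filter is_edit cs)"
      using aligns_has_edit[OF that assms(3)] by (simp add: Suc_le_eq)
    with assms have "min \<gamma> (\<beta> - \<alpha>) \<le> min \<gamma> (\<beta> - \<alpha>) * length (filter is_edit cs)"
      using mult_left_mono[of 1 "real (length (filter is_edit cs))" "min \<gamma> (\<beta> - \<alpha>)"] by simp
    with columns_score_lower_bound[OF \<alpha>_nonpos \<alpha>_le_\<beta> \<gamma>_nonneg, of cs] that show ?thesis
      by (simp add: aligns_def)
  qed
  then have "\<alpha> * length x + min \<gamma> (\<beta> - \<alpha>) \<le> score \<alpha> \<beta> \<gamma> x y"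
    unfolding score_eq_INF_aligns using aligns_exists by (intro cINF_greatest) auto
  with assms show ?thesis by (simp add: score_self)
qed

lemma score_triangle:
  "score \<alpha> \<beta> \<gamma> x y \<le> score \<alpha> \<beta> \<gamma> x z + score \<alpha> \<beta> \<gamma> z y - score \<alpha> \<beta> \<gamma> z z"
proof -
  have merged: "score \<alpha> \<beta> \<gamma> x y + \<alpha> * length z - columns_score \<alpha> \<beta> \<gamma> q \<le> columns_score \<alpha> \<beta> \<gamma> p"
    if "aligns x z p" "aligns z y q" for p q
    using that score_le[of x y "merge_columns p q"]
      columns_score_merge_columns[OF \<alpha>_nonpos \<alpha>_le_\<beta> \<gamma>_nonneg, of p q]
    by (simp add: aligns_def del_gaps_fst_merge_columns del_gaps_snd_merge_columns)
  have "score \<alpha> \<beta> \<gamma> x y + \<alpha> * length z - columns_score \<alpha> \<beta> \<gamma> q \<le> score \<alpha> \<beta> \<gamma> x z"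
    if "aligns z y q" for q
    unfolding score_eq_INF_aligns[of _ _ _ x z] using aligns_exists merged[OF _ that]
    by (intro cINF_greatest) auto
  then have "score \<alpha> \<beta> \<gamma> x y + \<alpha> * length z - score \<alpha> \<beta> \<gamma> x z \<le> score \<alpha> \<beta> \<gamma> z y"
    unfolding score_eq_INF_aligns[of _ _ _ z y] using aligns_exists
    by (intro cINF_greatest) (auto simp: algebra_simps)
  then show ?thesis by (simp add: score_self)
qed

end

theorem lemma2p2:
  fixes \<alpha> \<beta> \<gamma> :: real
  assumes "\<alpha> < min \<beta> (min \<gamma> 0)" and "\<beta> \<le> 2 * \<gamma>" and "\<gamma> > 0"
  shows "strong_partial_metric (score \<alpha> \<beta> \<gamma> :: 'a::finite list \<Rightarrow> 'a list \<Rightarrow> real)"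
proof -
  have hyps: "\<alpha> \<le> 0" "\<alpha> \<le> \<beta>" "0 \<le> \<gamma>" and "\<alpha> < \<beta>"
    using assms by simp_all
  show ?thesis
    unfolding strong_partial_metric_def
    using score_self_less[OF hyps \<open>\<alpha> < \<beta>\<close> \<open>\<gamma> > 0\<close>] score_commute[OF hyps]
      score_triangle[OF hyps]
    by blast
qed

end
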